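(* Let $s,k$ be integers with $4 \le s \le k$. There exists a $T_s$-free directed graph $D$ without loops on $N = 2^{2s-3} - 2^{s-1} - 2^{s-2} + 1$ vertices such that \[ \mathrm{fwi}_k(D) \le \sum_{t=1}^{s-1} \binom{k}{t} 2^{(s-1)(t+k) - \binom{t+1}{2}}. \] In particular, if $k = s + a$ where $a \ge 0$ and $a = o(s)$ (as $s \to \infty$), then \[ \mathrm{fwi}_k(D) \le 2^{\frac{3}{2}s^2 + as - \frac{5}{2}s + o(s)}. \]
   Context: $T_s$ is the transitive tournament on $s$ vertices; a digraph is $T_s$-free if it contains no copy of $T_s$. For a digraph $D$, a $k$-tuple $(v_1,\dots,v_k)\in V(D)^k$ is forward independent if there are no $i<j$ in $[k]$ with $(v_i,v_j)$ an arc of $D$; $\mathrm{fwi}_k(D)$ denotes the number of forward independent $k$-tuples in $D$. *)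

theory Defs
  imports Complex_Main "HOL-Library.Landau_Symbols"
begin

text \<open>A directed graph without loops on vertex set V with arc relation E.
  Pairs of opposite arcs are allowed.\<close>
definition loopless_digraph :: "'a set \<Rightarrow> ('a \<times> 'a) set \<Rightarrow> bool" where
  "loopless_digraph V E \<longleftrightarrow> finite V \<and> E \<subseteq> V \<times> V \<and> (\<forall>v. (v, v) \<notin> E)"

definition contains_Ts :: "'a set \<Rightarrow> ('a \<times> 'a) set \<Rightarrow> nat \<Rightarrow> bool" where
  "contains_Ts V E s \<longleftrightarrow>
     (\<exists>f. inj_on f {0..<s} \<and> f ` {0..<s} \<subseteq> V \<and>
          (\<forall>i j. i < j \<and> j < s \<longrightarrow> (f i, f j) \<in> E))"

definition Ts_free :: "'a set \<Rightarrow> ('a \<times> 'a) set \<Rightarrow> nat \<Rightarrow> bool" where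
  "Ts_free V E s \<longleftrightarrow> \<not> contains_Ts V E s"

definition fwi :: "'a set \<Rightarrow> ('a \<times> 'a) set \<Rightarrow> nat \<Rightarrow> nat" where
  "fwi V E k = card {xs. length xs = k \<and> set xs \<subseteq> V \<and>
                         (\<forall>i j. i < j \<and> j < k \<longrightarrow> (xs ! i, xs ! j) \<notin> E)}"

end

(*
  Let d = s - 1. The vertices are pairs (a, x) of vectors of GF(2)^d with <a, x> = 1, and
  there is an arc u -> v (u ~= v) whenever <a_v, x_u> = 0; there are (2^d - 1) 2^(d-1) >= N
  such pairs. A transitive tournament v_1, ..., v_s would give <a_j, x_i> = 0 for i < j and
  <a_i, x_i> = 1, making x_1, ..., x_s linearly independent in dimension s - 1.

  A forward independent k-tuple satisfies <a_j, x_i> = 1 for all i <= j. Build it from its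
  last entry backwards, keeping track of the span W of the a's seen so far. If the new a lies
  in W, the new pair is one of |W| |W^perp| <= 2^d choices, because the admissible x form a
  coset of W^perp. If the new a raises dim W to i, there are at most 2^d choices for a and
  2^(d-i) for x. Choosing the t steps at which the dimension grows gives the bound.
  For the asymptotic form, trade (k choose t) <= (2^L + 1)^k / 2^(L t) against the quadratic
  exponent and let L grow slowly.
*)

theory Submission
  imports Defs "HOL-Real_Asymp.Real_Asymp"
begin

section \<open>Vectors over GF(2)\<close>

text \<open>A vector of GF(2)^d is a subset of \<open>{0..<d}\<close>, addition is symmetric difference, and
  \<open>inner2 a b\<close> says that the inner product of \<open>a\<close> and \<open>b\<close> is 1.\<close>

definition inner2 :: "nat set \<Rightarrow> nat set \<Rightarrow> bool" where
  "inner2 a b \<longleftrightarrow> odd (card (a \<inter> b))"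

lemma inner2_commute: "inner2 a b = inner2 b a"
  by (simp add: inner2_def Int_commute)

lemma inner2_sym_diff_left:
  assumes "finite c"
  shows "inner2 (sym_diff a b) c \<longleftrightarrow> inner2 a c \<noteq> inner2 b c"
proof -
  have fin: "finite (X \<inter> c)" for X using assms by blast
  have "card (a \<inter> c) = card (a \<inter> b \<inter> c) + card ((a - b) \<inter> c)"
    using fin by (subst card_Un_disjoint[symmetric]) (auto intro: arg_cong[where f = card])
  moreover have "card (b \<inter> c) = card (a \<inter> b \<inter> c) + card ((b - a) \<inter> c)"
    using fin by (subst card_Un_disjoint[symmetric]) (auto intro: arg_cong[where f = card])
  moreover have "card (sym_diff a b \<inter> c) = card ((a - b) \<inter> c) + card ((b - a) \<inter> c)"
    using fin by (subst card_Un_disjoint[symmetric]) (auto intro: arg_cong[where f = card])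
  ultimately show ?thesis
    unfolding inner2_def by presburger
qed

lemma inner2_sym_diff_right:
  "finite c \<Longrightarrow> inner2 c (sym_diff a b) \<longleftrightarrow> inner2 c a \<noteq> inner2 c b"
  using inner2_sym_diff_left by (simp add: inner2_commute)

lemma sym_diff_cancel_left: "sym_diff a (sym_diff a v) = v"
  by blast

fun span2 :: "nat set list \<Rightarrow> nat set set" where
  "span2 [] = {{}}"
| "span2 (a # as) = span2 as \<union> (\<lambda>v. sym_diff a v) ` span2 as"

declare span2.simps(2) [simp del]

lemma finite_span2: "finite (span2 as)"
  by (induction as) (auto simp: span2.simps)

lemma empty_in_span2: "{} \<in> span2 as"
  by (induction as) (auto simp: span2.simps)

lemma span2_Cons_iff: "v \<in> span2 (a # as) \<longleftrightarrow> v \<in> span2 as \<or> sym_diff a v \<in> span2 as"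
proof -
  have "v \<in> (\<lambda>w. sym_diff a w) ` span2 as \<longleftrightarrow> sym_diff a v \<in> span2 as"
  proof
    assume "v \<in> (\<lambda>w. sym_diff a w) ` span2 as"
    then show "sym_diff a v \<in> span2 as"
      by (auto simp: sym_diff_cancel_left)
  next
    assume "sym_diff a v \<in> span2 as"
    then show "v \<in> (\<lambda>w. sym_diff a w) ` span2 as"
      by (rule rev_image_eqI) (simp add: sym_diff_cancel_left)
  qed
  then show ?thesis
    unfolding span2.simps(2) by blast
qed

lemma set_subset_span2: "set as \<subseteq> span2 as"
  by (induction as) (auto simp: span2_Cons_iff empty_in_span2)

lemma span2_subset_Pow: "set as \<subseteq> Pow S \<Longrightarrow> span2 as \<subseteq> Pow S"
  by (induction as) (auto simp: span2.simps)

lemma sym_diff_in_span2: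
  "u \<in> span2 as \<Longrightarrow> v \<in> span2 as \<Longrightarrow> sym_diff u v \<in> span2 as"
proof (induction as arbitrary: u v)
  case Nil
  then show ?case by simp
next
  case (Cons a as)
  have shift: "sym_diff (sym_diff a u) v = sym_diff a (sym_diff u v)"
    "sym_diff u (sym_diff a v) = sym_diff a (sym_diff u v)"
    "sym_diff (sym_diff a u) (sym_diff a v) = sym_diff u v"
    by blast+
  from Cons.prems consider
      "u \<in> span2 as" "v \<in> span2 as"
    | "sym_diff a u \<in> span2 as" "v \<in> span2 as"
    | "u \<in> span2 as" "sym_diff a v \<in> span2 as"
    | "sym_diff a u \<in> span2 as" "sym_diff a v \<in> span2 as"
    unfolding span2_Cons_iff by blast
  then show ?case
    unfolding span2_Cons_iff by cases (use Cons.IH shift in \<open>metis+\<close>)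
qed

lemma span2_Cons_mem:
  assumes "a \<in> span2 as"
  shows "span2 (a # as) = span2 as"
proof -
  have "v \<in> span2 as" if "sym_diff a v \<in> span2 as" for v
    using sym_diff_in_span2[OF assms that] by (simp add: sym_diff_cancel_left)
  then show ?thesis
    using span2_Cons_iff by blast
qed

lemma card_span2_Cons_not_mem:
  assumes "a \<notin> span2 as"
  shows "card (span2 (a # as)) = 2 * card (span2 as)"
proof -
  have "sym_diff a v \<notin> span2 as" if "v \<in> span2 as" for v
  proof
    assume "sym_diff a v \<in> span2 as"
    then have "sym_diff (sym_diff a v) v \<in> span2 as"
      using that by (rule sym_diff_in_span2)
    moreover have "sym_diff (sym_diff a v) v = a"
      by blast
    ultimately show False
      using assms by simp
  qed
  then have "span2 as \<inter> (\<lambda>v. sym_diff a v) ` span2 as = {}"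
    by blast
  moreover have "card ((\<lambda>v. sym_diff a v) ` span2 as) = card (span2 as)"
    by (rule card_image, rule inj_onI) blast
  ultimately show ?thesis
    unfolding span2.simps(2) by (simp add: card_Un_disjoint finite_span2)
qed

lemma card_span2_power_of_two: "\<exists>t. card (span2 as) = 2 ^ t"
proof (induction as)
  case Nil
  show ?case
    by (intro exI[of _ 0]) simp
next
  case (Cons a as)
  then obtain t where "card (span2 as) = 2 ^ t" ..
  then show ?case
    using span2_Cons_mem card_span2_Cons_not_mem
    by (cases "a \<in> span2 as") (simp_all, metis power_Suc)
qed

lemma span2_orthogonal:
  assumes "finite y" "\<forall>a\<in>set as. \<not> inner2 a y" "v \<in> span2 as"
  shows "\<not> inner2 v y"
  using assms(2,3)
proof (induction as arbitrary: v)
  case Nil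
  then show ?case by (simp add: inner2_def)
next
  case (Cons a as)
  then show ?case
    using assms(1) inner2_sym_diff_left[of y a "sym_diff a v"]
    by (auto simp: span2_Cons_iff sym_diff_cancel_left)
qed

section \<open>Orthogonal complements\<close>

definition orth :: "nat \<Rightarrow> nat set set \<Rightarrow> nat set set" where
  "orth d V = {y. y \<subseteq> {0..<d} \<and> (\<forall>v\<in>V. \<not> inner2 v y)}"

lemma finite_orth: "finite (orth d V)"
  by (rule finite_subset[of _ "Pow {0..<d}"]) (auto simp: orth_def)

lemma Diff_mem_orth_Suc:
  assumes "y \<in> orth (Suc d) V"
  shows "y - {d} \<in> orth d {v \<in> V. d \<notin> v}"
proof -
  have "v \<inter> (y - {d}) = v \<inter> y" if "d \<notin> v" for v
    using that by blast
  with assms show ?thesis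
    by (auto simp: orth_def inner2_def less_Suc_eq)
qed

lemma card_orth_Suc_le:
  "card (orth (Suc d) V) \<le> 2 * card (orth d {v \<in> V. d \<notin> v})"
proof -
  define P where "P = orth d {v \<in> V. d \<notin> v}"
  have "orth (Suc d) V \<subseteq> P \<union> insert d ` P"
  proof
    fix y
    assume y: "y \<in> orth (Suc d) V"
    then have "y - {d} \<in> P"
      unfolding P_def by (rule Diff_mem_orth_Suc)
    then show "y \<in> P \<union> insert d ` P"
      by (cases "d \<in> y") (simp_all add: image_eqI[of y "insert d" "y - {d}"] insert_absorb)
  qed
  then have "card (orth (Suc d) V) \<le> card (P \<union> insert d ` P)"
    by (intro card_mono) (simp_all add: P_def finite_orth)
  also have "\<dots> \<le> card P + card (insert d ` P)"
    by (rule card_Un_le)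
  also have "\<dots> \<le> 2 * card P"
    using card_image_le[of P "insert d"] by (simp add: P_def finite_orth)
  finally show ?thesis
    unfolding P_def .
qed

lemma card_orth_Suc_le_if_mem:
  assumes "w \<in> V" "d \<in> w" "finite w"
  shows "card (orth (Suc d) V) \<le> card (orth d {v \<in> V. d \<notin> v})"
proof -
  have "inj_on (\<lambda>y. y - {d}) (orth (Suc d) V)"
  proof (rule inj_onI, rule ccontr)
    fix y y'
    assume y: "y \<in> orth (Suc d) V" "y' \<in> orth (Suc d) V"
      and eq: "y - {d} = y' - {d}" and "y \<noteq> y'"
    then have "sym_diff y y' = {d}"
      by blast
    moreover have "\<not> inner2 w y" "\<not> inner2 w y'"
      using y assms(1) by (auto simp: orth_def)
    ultimately have "\<not> inner2 w {d}"
      using inner2_sym_diff_right[OF assms(3), of y y'] by simp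
    with assms(2) show False
      by (simp add: inner2_def)
  qed
  then show ?thesis
    using Diff_mem_orth_Suc by (intro card_inj_on_le[OF _ _ finite_orth]) auto
qed

lemma card_le_double_card_avoiding:
  assumes "finite V" "w \<in> V" "d \<in> w"
    and closed: "\<And>u v. u \<in> V \<Longrightarrow> v \<in> V \<Longrightarrow> sym_diff u v \<in> V"
  shows "card V \<le> 2 * card {v \<in> V. d \<notin> v}"
proof -
  define V0 where "V0 = {v \<in> V. d \<notin> v}"
  have "V \<subseteq> V0 \<union> (\<lambda>v. sym_diff w v) ` V0"
  proof
    fix v
    assume "v \<in> V"
    show "v \<in> V0 \<union> (\<lambda>v. sym_diff w v) ` V0"
    proof (cases "d \<in> v")
      case True
      then have "sym_diff w v \<in> V0"
        using closed[OF assms(2) \<open>v \<in> V\<close>] assms(3) by (auto simp: V0_def)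
      then show ?thesis
        by (intro UnI2 rev_image_eqI) blast+
    next
      case False
      with \<open>v \<in> V\<close> show ?thesis
        by (simp add: V0_def)
    qed
  qed
  then have "card V \<le> card (V0 \<union> (\<lambda>v. sym_diff w v) ` V0)"
    using assms(1) by (intro card_mono) (simp_all add: V0_def)
  also have "\<dots> \<le> card V0 + card ((\<lambda>v. sym_diff w v) ` V0)"
    by (rule card_Un_le)
  also have "\<dots> \<le> 2 * card V0"
    using card_image_le[of V0 "\<lambda>v. sym_diff w v"] assms(1) by (simp add: V0_def)
  finally show ?thesis
    unfolding V0_def .
qed

lemma card_mult_card_orth_le:
  assumes "V \<subseteq> Pow {0..<d}" "{} \<in> V"
    and "\<And>u v. u \<in> V \<Longrightarrow> v \<in> V \<Longrightarrow> sym_diff u v \<in> V"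
  shows "card V * card (orth d V) \<le> 2 ^ d"
  using assms
proof (induction d arbitrary: V)
  case 0
  have "V \<subseteq> {{}}" "orth 0 V \<subseteq> {{}}"
    using "0.prems"(1) by (simp_all add: orth_def subset_eq)
  then have "card V \<le> card {{}::nat set}" "card (orth 0 V) \<le> card {{}::nat set}"
    by (simp_all only: card_mono finite.emptyI finite_insert)
  then show ?case
    using mult_le_mono[of "card V" 1 "card (orth 0 V)" 1] by simp
next
  case (Suc d)
  define V0 where "V0 = {v \<in> V. d \<notin> v}"
  have "V0 \<subseteq> Pow {0..<d}"
  proof
    fix v
    assume "v \<in> V0"
    then have "v \<subseteq> {0..<Suc d}" "d \<notin> v"
      using Suc.prems(1) by (auto simp: V0_def)
    then show "v \<in> Pow {0..<d}"
      by (auto simp: subset_iff less_Suc_eq)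
  qed
  moreover have "{} \<in> V0"
    using Suc.prems(2) by (simp add: V0_def)
  moreover have "sym_diff u v \<in> V0" if "u \<in> V0" "v \<in> V0" for u v
    using that Suc.prems(3) by (auto simp: V0_def)
  ultimately have IH: "card V0 * card (orth d V0) \<le> 2 ^ d"
    by (rule Suc.IH)
  have "finite V"
    using Suc.prems(1) finite_subset by blast
  show ?case
  proof (cases "\<exists>w\<in>V. d \<in> w")
    case True
    then obtain w where w: "w \<in> V" "d \<in> w"
      by blast
    then have "finite w"
      using Suc.prems(1) finite_subset by blast
    have "card V * card (orth (Suc d) V) \<le> (2 * card V0) * card (orth d V0)"
      using card_le_double_card_avoiding[OF \<open>finite V\<close> w Suc.prems(3)]
        card_orth_Suc_le_if_mem[OF w \<open>finite w\<close>]
      unfolding V0_def by (rule mult_le_mono)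
    with IH show ?thesis
      by simp
  next
    case False
    then have "V0 = V"
      by (auto simp: V0_def)
    have "card V * card (orth (Suc d) V) \<le> card V0 * (2 * card (orth d V0))"
      using card_orth_Suc_le[of d V] \<open>V0 = V\<close> unfolding V0_def by simp
    with IH show ?thesis
      by simp
  qed
qed

definition odd_solutions :: "nat \<Rightarrow> nat set list \<Rightarrow> nat set set" where
  "odd_solutions d as = {x. x \<subseteq> {0..<d} \<and> (\<forall>a\<in>set as. inner2 a x)}"

lemma finite_odd_solutions: "finite (odd_solutions d as)"
  by (rule finite_subset[of _ "Pow {0..<d}"]) (auto simp: odd_solutions_def)

lemma card_span2_mult_card_odd_solutions_le:
  assumes "set as \<subseteq> Pow {0..<d}"
  shows "card (span2 as) * card (odd_solutions d as) \<le> 2 ^ d"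
proof (cases "odd_solutions d as = {}")
  case False
  then obtain x0 where x0: "x0 \<in> odd_solutions d as"
    by blast
  txt \<open>The solutions form a coset of the orthogonal complement of the span.\<close>
  have "(\<lambda>x. sym_diff x x0) ` odd_solutions d as \<subseteq> orth d (span2 as)"
  proof clarify
    fix x
    assume x: "x \<in> odd_solutions d as"
    then have sub: "sym_diff x x0 \<subseteq> {0..<d}"
      using x0 by (auto simp: odd_solutions_def)
    have "\<not> inner2 a (sym_diff x x0)" if "a \<in> set as" for a
    proof -
      have "finite a"
        using that assms finite_subset by blast
      then show ?thesis
        using x x0 that by (simp add: odd_solutions_def inner2_sym_diff_right)
    qed
    then show "sym_diff x x0 \<in> orth d (span2 as)"
      using span2_orthogonal[of "sym_diff x x0" as] sub finite_subset
      by (auto simp: orth_def)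
  qed
  moreover have "inj_on (\<lambda>x. sym_diff x x0) (odd_solutions d as)"
    by (rule inj_onI) blast
  ultimately have "card (odd_solutions d as) \<le> card (orth d (span2 as))"
    by (intro card_inj_on_le[OF _ _ finite_orth])
  then have "card (span2 as) * card (odd_solutions d as) \<le> card (span2 as) * card (orth d (span2 as))"
    by simp
  also have "\<dots> \<le> 2 ^ d"
    using assms by (intro card_mult_card_orth_le span2_subset_Pow empty_in_span2 sym_diff_in_span2)
  finally show ?thesis .
qed simp

lemma card_odd_solutions_le:
  assumes "set as \<subseteq> Pow {0..<d}" "card (span2 as) = 2 ^ t"
  shows "card (odd_solutions d as) \<le> 2 ^ (d - t)"
proof (cases "t \<le> d")
  case True
  then have "2 ^ t * card (odd_solutions d as) \<le> 2 ^ t * 2 ^ (d - t)"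
    using card_span2_mult_card_odd_solutions_le[OF assms(1)] assms(2) by (simp flip: power_add)
  then show ?thesis
    by simp
next
  case False
  then have "2 ^ d < card (span2 as)"
    using assms(2) by simp
  moreover have "card (span2 as) \<le> card (span2 as) * card (odd_solutions d as)"
    if "card (odd_solutions d as) \<noteq> 0"
    using that by simp
  ultimately have "card (odd_solutions d as) = 0"
    using card_span2_mult_card_odd_solutions_le[OF assms(1)] by linarith
  then show ?thesis
    by simp
qed

lemma triangular_length_le:
  assumes sub: "\<And>i. i < m \<Longrightarrow> x i \<subseteq> {0..<d} \<and> y i \<subseteq> {0..<d}"
    and diag: "\<And>i. i < m \<Longrightarrow> inner2 (y i) (x i)"
    and upper: "\<And>i j. i < j \<Longrightarrow> j < m \<Longrightarrow> \<not> inner2 (y j) (x i)"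
  shows "m \<le> d"
proof -
  define xs where "xs n = map x (rev [0..<n])" for n
  have card_span: "card (span2 (xs n)) = 2 ^ n" if "n \<le> m" for n
    using that
  proof (induction n)
    case (Suc n)
    have "finite (y n)"
      using sub[of n] Suc.prems finite_subset by auto
    moreover have "\<forall>a\<in>set (xs n). \<not> inner2 a (y n)"
      using upper Suc.prems by (auto simp: xs_def inner2_commute)
    ultimately have "x n \<notin> span2 (xs n)"
      using span2_orthogonal diag[of n] Suc.prems by (metis Suc_le_lessD inner2_commute)
    then show ?case
      using Suc by (simp add: xs_def card_span2_Cons_not_mem)
  qed (simp add: xs_def)
  have "span2 (xs m) \<subseteq> Pow {0..<d}"
    using sub by (intro span2_subset_Pow) (auto simp: xs_def subset_iff)
  then have "card (span2 (xs m)) \<le> card (Pow {0..<d})"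
    by (intro card_mono) auto
  then have "(2::nat) ^ m \<le> 2 ^ d"
    by (simp add: card_span card_Pow)
  then show ?thesis
    by simp
qed

section \<open>The vertex set\<close>

definition unit_pairs :: "nat \<Rightarrow> (nat set \<times> nat set) set" where
  "unit_pairs d = {(a, x). a \<subseteq> {0..<d} \<and> x \<subseteq> {0..<d} \<and> inner2 a x}"

lemma mem_unit_pairs:
  "p \<in> unit_pairs d \<longleftrightarrow> fst p \<subseteq> {0..<d} \<and> snd p \<subseteq> {0..<d} \<and> inner2 (fst p) (snd p)"
  by (cases p) (simp add: unit_pairs_def)

lemma finite_unit_pairs: "finite (unit_pairs d)"
  by (rule finite_subset[of _ "Pow {0..<d} \<times> Pow {0..<d}"]) (auto simp: unit_pairs_def)

lemma card_inner2_odd: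
  assumes "a \<subseteq> {0..<d}" "a \<noteq> {}"
  shows "card {x \<in> Pow {0..<d}. inner2 a x} = 2 ^ (d - 1)"
proof -
  obtain m where m: "m \<in> a"
    using assms(2) by blast
  with assms(1) have "m < d" "finite a"
    using finite_subset by auto
  have flip: "inner2 a (sym_diff x {m}) \<longleftrightarrow> \<not> inner2 a x" for x
  proof -
    have "inner2 a {m}"
      using m by (simp add: inner2_def Int_absorb1)
    then show ?thesis
      using inner2_sym_diff_right[OF \<open>finite a\<close>] by blast
  qed
  have "bij_betw (\<lambda>x. sym_diff x {m}) {x \<in> Pow {0..<d}. inner2 a x} (Pow {0..<d} - {x. inner2 a x})"
    by (rule bij_betw_byWitness[where f' = "\<lambda>x. sym_diff x {m}"]) (use flip \<open>m < d\<close> in auto)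
  then have "card {x \<in> Pow {0..<d}. inner2 a x} = card (Pow {0..<d} - {x. inner2 a x})"
    by (rule bij_betw_same_card)
  moreover have "card (Pow {0..<d}) = card (Pow {0..<d} \<inter> {x. inner2 a x}) + card (Pow {0..<d} - {x. inner2 a x})"
    by (rule card_Int_Diff) simp
  moreover have "Pow {0..<d} \<inter> {x. inner2 a x} = {x \<in> Pow {0..<d}. inner2 a x}"
    by blast
  ultimately have "2 * card {x \<in> Pow {0..<d}. inner2 a x} = 2 ^ d"
    by (simp add: card_Pow)
  with \<open>m < d\<close> show ?thesis
    by (cases d) simp_all
qed

lemma card_unit_pairs: "card (unit_pairs d) = (2 ^ d - 1) * 2 ^ (d - 1)"
proof -
  have "unit_pairs d = (SIGMA a:Pow {0..<d} - {{}}. {x \<in> Pow {0..<d}. inner2 a x})"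
    by (auto simp: unit_pairs_def inner2_def)
  then have "card (unit_pairs d) = (\<Sum>a\<in>Pow {0..<d} - {{}}. card {x \<in> Pow {0..<d}. inner2 a x})"
    by simp
  also have "\<dots> = (\<Sum>a\<in>Pow {0..<d} - {{}}. 2 ^ (d - 1))"
    by (intro sum.cong refl card_inner2_odd) auto
  also have "\<dots> = (2 ^ d - 1) * 2 ^ (d - 1)"
    by (simp add: card_Pow)
  finally show ?thesis .
qed

definition vertex_count :: "nat \<Rightarrow> nat" where
  "vertex_count s = 2 ^ (2 * s - 3) - 2 ^ (s - 1) - 2 ^ (s - 2) + 1"

lemma vertex_count_le_card_unit_pairs:
  assumes "2 \<le> s"
  shows "vertex_count s \<le> card (unit_pairs (s - 1))"
proof -
  obtain d where s: "s = d + 2"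
    using assms le_Suc_ex by (metis add.commute)
  define q :: nat where "q = 2 ^ d"
  have "1 \<le> q" "q \<le> q * q"
    by (simp_all add: q_def)
  then have "2 * (q * q) - 2 * q - q + 1 \<le> 2 * (q * q) - q"
    by linarith
  also have "\<dots> = (2 * q - 1) * q"
    by (simp add: diff_mult_distrib)
  finally show ?thesis
    unfolding vertex_count_def card_unit_pairs s q_def by (simp add: mult_2 power_add flip: mult.assoc)
qed

section \<open>Counting forward chains\<close>

definition forward_chains :: "nat \<Rightarrow> nat \<Rightarrow> (nat set \<times> nat set) list set" where
  "forward_chains d k = {ws. length ws = k \<and> set ws \<subseteq> unit_pairs d \<and>
     (\<forall>i j. i < j \<and> j < k \<longrightarrow> inner2 (fst (ws ! j)) (snd (ws ! i)))}"

lemma finite_forward_chains: "finite (forward_chains d k)"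
  by (rule finite_subset[OF _ finite_lists_length_eq[OF finite_unit_pairs, of d k]])
    (auto simp: forward_chains_def)

lemma forward_chains_0: "forward_chains d 0 = {[]}"
  by (auto simp: forward_chains_def)

lemma Cons_in_forward_chains:
  "a # ws \<in> forward_chains d (Suc k) \<longleftrightarrow>
     a \<in> unit_pairs d \<and> ws \<in> forward_chains d k \<and> (\<forall>b\<in>set ws. inner2 (fst b) (snd a))"
proof -
  let ?P = "\<lambda>i j. inner2 (fst ((a # ws) ! j)) (snd ((a # ws) ! i))"
  have "(\<forall>i j. i < j \<and> j < Suc k \<longrightarrow> ?P i j) \<longleftrightarrow>
      (\<forall>j < k. ?P 0 (Suc j)) \<and> (\<forall>i j. i < j \<and> j < k \<longrightarrow> ?P (Suc i) (Suc j))"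
    (is "?L \<longleftrightarrow> ?R")
  proof
    assume L: ?L
    show ?R
    proof (intro conjI allI impI)
      show "?P 0 (Suc j)" if "j < k" for j
        using L[rule_format, of 0 "Suc j"] that by simp
      show "?P (Suc i) (Suc j)" if "i < j \<and> j < k" for i j
        using L[rule_format, of "Suc i" "Suc j"] that by simp
    qed
  next
    assume ?R
    show ?L
    proof (intro allI impI)
      fix i j
      assume "i < j \<and> j < Suc k"
      with \<open>?R\<close> show "?P i j"
        by (cases i; cases j) auto
    qed
  qed
  then show ?thesis
    by (auto simp: forward_chains_def all_set_conv_all_nth)
qed

lemma forward_chains_subset_Pow:
  "ws \<in> forward_chains d k \<Longrightarrow> set (map fst ws) \<subseteq> Pow {0..<d}"
  unfolding forward_chains_def unit_pairs_def by force

lemma snd_in_odd_solutions: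
  "a # ws \<in> forward_chains d (Suc k) \<Longrightarrow> snd a \<in> odd_solutions d (fst a # map fst ws)"
  by (auto simp: Cons_in_forward_chains odd_solutions_def unit_pairs_def)

definition forward_chains_dim :: "nat \<Rightarrow> nat \<Rightarrow> nat \<Rightarrow> (nat set \<times> nat set) list set" where
  "forward_chains_dim d k t = {ws \<in> forward_chains d k. card (span2 (map fst ws)) = 2 ^ t}"

lemma forward_chains_dim_Suc_0: "forward_chains_dim d (Suc k) 0 = {}"
proof -
  have "2 \<le> card (span2 (map fst ws))" if "ws \<in> forward_chains d (Suc k)" for ws
  proof -
    obtain a p where ws: "ws = a # p"
      using \<open>ws \<in> forward_chains d (Suc k)\<close> by (cases ws) (auto simp: forward_chains_def)
    then have "inner2 (fst a) (snd a)"
      using that by (auto simp: Cons_in_forward_chains unit_pairs_def)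
    then have "fst a \<noteq> {}"
      by (auto simp: inner2_def)
    moreover have "{{}, fst a} \<subseteq> span2 (map fst ws)"
      using ws set_subset_span2[of "map fst ws"] empty_in_span2 by auto
    then have "card {{}, fst a} \<le> card (span2 (map fst ws))"
      by (rule card_mono[OF finite_span2])
    ultimately show ?thesis
      by simp
  qed
  then show ?thesis
    unfolding forward_chains_dim_def by force
qed

lemma card_extensions_in_span_le:
  assumes "ws \<in> forward_chains d k"
  shows "card {a. a # ws \<in> forward_chains d (Suc k) \<and> fst a \<in> span2 (map fst ws)} \<le> 2 ^ d"
proof -
  have "{a. a # ws \<in> forward_chains d (Suc k) \<and> fst a \<in> span2 (map fst ws)}
      \<subseteq> span2 (map fst ws) \<times> odd_solutions d (map fst ws)"
  proof
    fix a
    assume a: "a \<in> {a. a # ws \<in> forward_chains d (Suc k) \<and> fst a \<in> span2 (map fst ws)}"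
    then have "snd a \<in> odd_solutions d (map fst ws)"
      using snd_in_odd_solutions[of a ws d k] by (auto simp: odd_solutions_def)
    with a show "a \<in> span2 (map fst ws) \<times> odd_solutions d (map fst ws)"
      by (cases a) auto
  qed
  then have "card {a. a # ws \<in> forward_chains d (Suc k) \<and> fst a \<in> span2 (map fst ws)}
      \<le> card (span2 (map fst ws) \<times> odd_solutions d (map fst ws))"
    by (intro card_mono) (simp_all add: finite_span2 finite_odd_solutions)
  also have "\<dots> = card (span2 (map fst ws)) * card (odd_solutions d (map fst ws))"
    by (rule card_cartesian_product)
  also have "\<dots> \<le> 2 ^ d"
    using assms by (intro card_span2_mult_card_odd_solutions_le forward_chains_subset_Pow)
  finally show ?thesis .
qed

lemma card_extensions_dim_le:
  assumes "ws \<in> forward_chains d k"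
  shows "card {a. a # ws \<in> forward_chains d (Suc k) \<and> card (span2 (fst a # map fst ws)) = 2 ^ t}
    \<le> 2 ^ d * 2 ^ (d - t)"
proof -
  define A where "A = {a \<in> Pow {0..<d}. card (span2 (a # map fst ws)) = 2 ^ t}"
  have "{a. a # ws \<in> forward_chains d (Suc k) \<and> card (span2 (fst a # map fst ws)) = 2 ^ t}
      \<subseteq> (SIGMA a:A. odd_solutions d (a # map fst ws))"
  proof
    fix a
    assume a: "a \<in> {a. a # ws \<in> forward_chains d (Suc k) \<and> card (span2 (fst a # map fst ws)) = 2 ^ t}"
    then have "fst a \<in> A"
      by (auto simp: A_def Cons_in_forward_chains unit_pairs_def)
    with a show "a \<in> (SIGMA a:A. odd_solutions d (a # map fst ws))"
      using snd_in_odd_solutions[of a ws d k] by (cases a) auto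
  qed
  moreover have "finite A"
    by (simp add: A_def)
  ultimately have "card {a. a # ws \<in> forward_chains d (Suc k) \<and> card (span2 (fst a # map fst ws)) = 2 ^ t}
      \<le> card (SIGMA a:A. odd_solutions d (a # map fst ws))"
    by (intro card_mono) (simp_all add: finite_odd_solutions)
  also have "\<dots> = (\<Sum>a\<in>A. card (odd_solutions d (a # map fst ws)))"
    using \<open>finite A\<close> by (simp add: finite_odd_solutions)
  also have "\<dots> \<le> (\<Sum>a\<in>A. 2 ^ (d - t))"
    using forward_chains_subset_Pow[OF assms] by (intro sum_mono card_odd_solutions_le) (auto simp: A_def)
  also have "\<dots> \<le> card (Pow {0..<d}) * 2 ^ (d - t)"
    using card_mono[of "Pow {0..<d}" A] by (auto simp: A_def)
  finally show ?thesis
    by (simp add: card_Pow)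
qed

lemma finite_extensions: "finite {a. a # ws \<in> forward_chains d (Suc k) \<and> P a}"
  by (rule finite_subset[OF _ finite_unit_pairs]) (auto simp: Cons_in_forward_chains)

lemma card_forward_chains_dim_Suc_Suc_le:
  "card (forward_chains_dim d (Suc k) (Suc t))
    \<le> 2 ^ d * card (forward_chains_dim d k (Suc t)) + 2 ^ d * 2 ^ (d - Suc t) * card (forward_chains_dim d k t)"
proof -
  define old where
    "old ws = {a. a # ws \<in> forward_chains d (Suc k) \<and> fst a \<in> span2 (map fst ws)}" for ws
  define new where
    "new ws = {a. a # ws \<in> forward_chains d (Suc k) \<and> card (span2 (fst a # map fst ws)) = 2 ^ Suc t}"
    for ws
  have fin: "finite (old ws)" "finite (new ws)" for ws
    unfolding old_def new_def by (rule finite_extensions)+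
  have "forward_chains_dim d (Suc k) (Suc t) \<subseteq>
      (\<Union>ws\<in>forward_chains_dim d k (Suc t). (\<lambda>a. a # ws) ` old ws) \<union>
      (\<Union>ws\<in>forward_chains_dim d k t. (\<lambda>a. a # ws) ` new ws)"
  proof
    fix vs
    assume vs: "vs \<in> forward_chains_dim d (Suc k) (Suc t)"
    then obtain a ws where vs_eq: "vs = a # ws"
      by (cases vs) (auto simp: forward_chains_dim_def forward_chains_def)
    with vs have a_ws: "a # ws \<in> forward_chains d (Suc k)"
      and ws: "ws \<in> forward_chains d k"
      and card: "card (span2 (fst a # map fst ws)) = 2 ^ Suc t"
      by (auto simp: forward_chains_dim_def Cons_in_forward_chains)
    show "vs \<in> (\<Union>ws\<in>forward_chains_dim d k (Suc t). (\<lambda>a. a # ws) ` old ws) \<union>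
      (\<Union>ws\<in>forward_chains_dim d k t. (\<lambda>a. a # ws) ` new ws)"
    proof (cases "fst a \<in> span2 (map fst ws)")
      case True
      then have "ws \<in> forward_chains_dim d k (Suc t)"
        using ws card by (simp add: forward_chains_dim_def span2_Cons_mem)
      moreover have "a \<in> old ws"
        using True a_ws by (simp add: old_def)
      ultimately show ?thesis
        using vs_eq by blast
    next
      case False
      then have "ws \<in> forward_chains_dim d k t"
        using ws card by (simp add: forward_chains_dim_def card_span2_Cons_not_mem)
      moreover have "a \<in> new ws"
        using card a_ws by (simp add: new_def)
      ultimately show ?thesis
        using vs_eq by blast
    qed
  qed
  then have "card (forward_chains_dim d (Suc k) (Suc t)) \<le>
      card ((\<Union>ws\<in>forward_chains_dim d k (Suc t). (\<lambda>a. a # ws) ` old ws) \<union>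
      (\<Union>ws\<in>forward_chains_dim d k t. (\<lambda>a. a # ws) ` new ws))"
    by (intro card_mono) (simp_all add: fin forward_chains_dim_def finite_forward_chains)
  also have "\<dots> \<le> (\<Sum>ws\<in>forward_chains_dim d k (Suc t). card ((\<lambda>a. a # ws) ` old ws)) +
      (\<Sum>ws\<in>forward_chains_dim d k t. card ((\<lambda>a. a # ws) ` new ws))"
    by (intro order_trans[OF card_Un_le] add_mono card_UN_le) (simp_all add: forward_chains_dim_def finite_forward_chains)
  also have "\<dots> \<le> (\<Sum>ws\<in>forward_chains_dim d k (Suc t). 2 ^ d) + (\<Sum>ws\<in>forward_chains_dim d k t. 2 ^ d * 2 ^ (d - Suc t))"
  proof (intro add_mono sum_mono)
    fix ws
    assume "ws \<in> forward_chains_dim d k (Suc t)"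
    then show "card ((\<lambda>a. a # ws) ` old ws) \<le> 2 ^ d"
      unfolding old_def forward_chains_dim_def
      by (intro order_trans[OF card_image_le[OF finite_extensions]] card_extensions_in_span_le) simp
  next
    fix ws
    assume "ws \<in> forward_chains_dim d k t"
    then show "card ((\<lambda>a. a # ws) ` new ws) \<le> 2 ^ d * 2 ^ (d - Suc t)"
      unfolding new_def forward_chains_dim_def
      by (intro order_trans[OF card_image_le[OF finite_extensions]] card_extensions_dim_le) simp
  qed
  finally show ?thesis
    by (simp add: mult.commute)
qed

definition chain_bound :: "nat \<Rightarrow> nat \<Rightarrow> nat \<Rightarrow> nat" where
  "chain_bound d k t = (k choose t) * 2 ^ (d * k + (\<Sum>i=1..t. d - i))"

lemma chain_bound_Suc_Suc:
  "chain_bound d (Suc k) (Suc t) = 2 ^ d * chain_bound d k (Suc t) + 2 ^ d * 2 ^ (d - Suc t) * chain_bound d k t"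
  by (simp add: chain_bound_def power_add algebra_simps)

lemma card_forward_chains_dim_le: "card (forward_chains_dim d k t) \<le> chain_bound d k t"
proof (induction k arbitrary: t)
  case 0
  then show ?case
    by (cases t) (auto simp: forward_chains_dim_def forward_chains_0 chain_bound_def card_le_Suc0_iff_eq)
next
  case (Suc k)
  show ?case
  proof (cases t)
    case 0
    then show ?thesis
      by (simp add: forward_chains_dim_Suc_0)
  next
    case (Suc t')
    have "card (forward_chains_dim d (Suc k) (Suc t'))
      \<le> 2 ^ d * card (forward_chains_dim d k (Suc t')) + 2 ^ d * 2 ^ (d - Suc t') * card (forward_chains_dim d k t')"
      by (rule card_forward_chains_dim_Suc_Suc_le)
    also have "\<dots> \<le> 2 ^ d * chain_bound d k (Suc t') + 2 ^ d * 2 ^ (d - Suc t') * chain_bound d k t'"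
      using Suc.IH by (intro add_mono mult_le_mono2)
    finally show ?thesis
      by (simp add: Suc chain_bound_Suc_Suc)
  qed
qed

lemma card_forward_chains_le:
  assumes "0 < k"
  shows "card (forward_chains d k) \<le> (\<Sum>t=1..d. chain_bound d k t)"
proof -
  have "forward_chains d k \<subseteq> (\<Union>t\<in>{1..d}. forward_chains_dim d k t)"
  proof
    fix ws
    assume ws: "ws \<in> forward_chains d k"
    obtain t where t: "card (span2 (map fst ws)) = 2 ^ t"
      using card_span2_power_of_two by blast
    have "card (span2 (map fst ws)) \<le> card (Pow {0..<d})"
      using ws by (intro card_mono span2_subset_Pow forward_chains_subset_Pow) auto
    then have "t \<le> d"
      using t by (simp add: card_Pow)
    moreover have "t \<noteq> 0"
      using ws t assms forward_chains_dim_Suc_0[of d "k - 1"] by (auto simp: forward_chains_dim_def)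
    ultimately show "ws \<in> (\<Union>t\<in>{1..d}. forward_chains_dim d k t)"
      using ws t by (auto simp: forward_chains_dim_def)
  qed
  then have "card (forward_chains d k) \<le> card (\<Union>t\<in>{1..d}. forward_chains_dim d k t)"
    by (intro card_mono) (auto simp: forward_chains_dim_def finite_forward_chains)
  also have "\<dots> \<le> (\<Sum>t=1..d. card (forward_chains_dim d k t))"
    by (rule card_UN_le) simp
  also have "\<dots> \<le> (\<Sum>t=1..d. chain_bound d k t)"
    by (intro sum_mono card_forward_chains_dim_le)
  finally show ?thesis .
qed

lemma chain_bound_eq:
  assumes "t \<le> d"
  shows "chain_bound d k t = (k choose t) * 2 ^ (d * (t + k) - ((t + 1) choose 2))"
proof -
  have "(\<Sum>i=1..t. d - i) + ((t + 1) choose 2) = d * t"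
    using assms
  proof (induction t)
    case (Suc t)
    have "(Suc t + 1) choose 2 = Suc t + ((t + 1) choose 2)"
      by (simp add: numeral_2_eq_2)
    with Suc show ?case
      by simp
  qed simp
  then have "d * k + (\<Sum>i=1..t. d - i) = d * (t + k) - ((t + 1) choose 2)"
    unfolding distrib_left by linarith
  then show ?thesis
    by (simp add: chain_bound_def)
qed

section \<open>The digraph\<close>

definition pair_arcs :: "nat \<Rightarrow> (nat \<Rightarrow> nat set \<times> nat set) \<Rightarrow> (nat \<times> nat) set" where
  "pair_arcs N g = {(u, v). u < N \<and> v < N \<and> u \<noteq> v \<and> \<not> inner2 (fst (g v)) (snd (g u))}"

lemma loopless_pair_arcs: "loopless_digraph {0..<N} (pair_arcs N g)"
  by (auto simp: loopless_digraph_def pair_arcs_def)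

lemma Ts_free_pair_arcs:
  assumes "g ` {0..<N} \<subseteq> unit_pairs d"
  shows "Ts_free {0..<N} (pair_arcs N g) (Suc d)"
  unfolding Ts_free_def contains_Ts_def
proof clarify
  fix f
  assume f: "f ` {0..<Suc d} \<subseteq> {0..<N}"
    and arcs: "\<forall>i j. i < j \<and> j < Suc d \<longrightarrow> (f i, f j) \<in> pair_arcs N g"
  have "g (f i) \<in> unit_pairs d" if "i < Suc d" for i
    using assms f that by (meson atLeastLessThan_iff image_subset_iff zero_le)
  then have "Suc d \<le> d"
    using arcs by (intro triangular_length_le[where x = "\<lambda>i. snd (g (f i))" and y = "\<lambda>i. fst (g (f i))"])
      (simp_all add: mem_unit_pairs pair_arcs_def)
  then show False
    by simp
qed

lemma fwi_pair_arcs_le: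
  assumes "inj_on g {0..<N}" "g ` {0..<N} \<subseteq> unit_pairs d"
  shows "fwi {0..<N} (pair_arcs N g) k \<le> card (forward_chains d k)"
proof -
  define F where "F = {xs. length xs = k \<and> set xs \<subseteq> {0..<N} \<and>
    (\<forall>i j. i < j \<and> j < k \<longrightarrow> (xs ! i, xs ! j) \<notin> pair_arcs N g)}"
  have "map g ` F \<subseteq> forward_chains d k"
  proof clarify
    fix xs
    assume xs: "xs \<in> F"
    then have len: "length xs = k" and sub: "set xs \<subseteq> {0..<N}"
      by (simp_all add: F_def)
    have g_xs: "xs ! m < N" "g (xs ! m) \<in> unit_pairs d" if "m < k" for m
    proof -
      have "xs ! m \<in> {0..<N}"
        using that len sub by (simp add: subset_code(1))
      then show "xs ! m < N" "g (xs ! m) \<in> unit_pairs d"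
        using assms(2) by auto
    qed
    have "inner2 (fst (g (xs ! j))) (snd (g (xs ! i)))" if "i < j" "j < k" for i j
    proof (cases "xs ! i = xs ! j")
      case True
      then show ?thesis
        using g_xs(2)[OF \<open>j < k\<close>] by (simp add: mem_unit_pairs)
    next
      case False
      then show ?thesis
        using xs that g_xs(1)[of i] g_xs(1)[of j] by (auto simp: F_def pair_arcs_def)
    qed
    moreover have "set (map g xs) \<subseteq> unit_pairs d"
      using image_mono[OF sub, of g] assms(2) by simp
    ultimately show "map g xs \<in> forward_chains d k"
      using len by (simp add: forward_chains_def)
  qed
  moreover have "inj_on (map g) F"
    using assms(1) by (intro inj_on_mapI inj_on_subset[OF assms(1)]) (auto simp: F_def)
  ultimately have "card F \<le> card (forward_chains d k)"
    by (intro card_inj_on_le[OF _ _ finite_forward_chains])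
  then show ?thesis
    by (simp add: fwi_def F_def)
qed

lemma exists_Ts_free_digraph:
  assumes "N \<le> card (unit_pairs d)" "0 < k"
  shows "\<exists>E. loopless_digraph {0..<N} E \<and> Ts_free {0..<N} E (Suc d) \<and>
    fwi {0..<N} E k \<le> (\<Sum>t=1..d. (k choose t) * 2 ^ (d * (t + k) - ((t + 1) choose 2)))"
proof -
  obtain g where g: "g ` {0..<N} \<subseteq> unit_pairs d" "inj_on g {0..<N}"
    using card_le_inj[of "{0..<N}" "unit_pairs d"] assms(1) finite_unit_pairs by auto
  have "fwi {0..<N} (pair_arcs N g) k \<le> (\<Sum>t=1..d. chain_bound d k t)"
    using fwi_pair_arcs_le[OF g(2,1)] card_forward_chains_le[OF assms(2)] by (rule order_trans)
  also have "\<dots> = (\<Sum>t=1..d. (k choose t) * 2 ^ (d * (t + k) - ((t + 1) choose 2)))"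
    by (intro sum.cong refl chain_bound_eq) simp
  finally show ?thesis
    using loopless_pair_arcs Ts_free_pair_arcs[OF g(1)] by blast
qed

definition fwi_bound :: "nat \<Rightarrow> nat \<Rightarrow> nat" where
  "fwi_bound s k = (\<Sum>t=1..s-1. (k choose t) * 2 ^ ((s-1) * (t+k) - ((t+1) choose 2)))"

lemma exists_Ts_free_digraph_fwi_le:
  assumes "2 \<le> s" "0 < k"
  shows "\<exists>E. loopless_digraph {0..<vertex_count s} E \<and> Ts_free {0..<vertex_count s} E s \<and>
    fwi {0..<vertex_count s} E k \<le> fwi_bound s k"
  using exists_Ts_free_digraph[OF vertex_count_le_card_unit_pairs[OF assms(1)] assms(2)] assms(1)
  by (simp add: fwi_bound_def)

lemma fwi_bound_pos: "2 \<le> s \<Longrightarrow> 0 < k \<Longrightarrow> 0 < fwi_bound s k"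
  unfolding fwi_bound_def by (rule sum_pos2[of _ 1]) auto

lemma choose_mult_power_le:
  fixes y :: "'a::linordered_semidom"
  assumes "0 \<le> y"
  shows "of_nat (k choose t) * y ^ t \<le> (y + 1) ^ k"
proof (cases "t \<le> k")
  case True
  have "of_nat (k choose t) * y ^ t * 1 ^ (k - t) \<le> (\<Sum>i\<le>k. of_nat (k choose i) * y ^ i * 1 ^ (k - i))"
    using True assms by (intro member_le_sum) auto
  then show ?thesis
    by (simp add: binomial_ring)
next
  case False
  then show ?thesis
    using assms by (simp add: binomial_eq_0)
qed

lemma fwi_bound_term_le:
  fixes m k t L :: nat
  assumes "1 \<le> t" "t \<le> m"
  shows "real ((k choose t) * 2 ^ (m * (t + k) - ((t + 1) choose 2)))
    \<le> (2 ^ L + 1) ^ k * 2 powr (real m * k + real m * (real m - 1) / 2 + real L * (L + 1) / 2 - real L * m)"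
proof -
  txt \<open>The factor \<open>2 ^ (L * t)\<close> taken from the binomial coefficient is paid for by the
    quadratic exponent, since \<open>x * (x - 1) \<ge> 0\<close> for the integer \<open>x = m - t - L\<close>.\<close>
  define x :: int where "x = int m - int t - int L"
  have "0 \<le> x * (x - 1)"
    by (cases "x \<ge> 1") (simp_all add: mult_nonpos_nonpos)
  then have "real_of_int (x * (x - 1)) \<ge> 0"
    by linarith
  then have shift: "real m * t - real t * (t + 1) / 2 - real L * t
      \<le> real m * (real m - 1) / 2 + real L * (L + 1) / 2 - real L * m"
    by (simp add: x_def algebra_simps add_divide_distrib diff_divide_distrib)
  define c where "c = (t + 1) choose 2"
  have "2 * c = (t + 1) * t"
    by (simp add: c_def choose_two)
  then have c_real: "real c = real t * (t + 1) / 2"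
    by (simp add: field_simps flip: of_nat_mult)
  have "(t + 1) * t \<le> (2 * m) * (t + k)"
    using assms by (intro mult_le_mono) auto
  then have "c \<le> m * (t + k)"
    using \<open>2 * c = (t + 1) * t\<close> by linarith
  then have "real ((k choose t) * 2 ^ (m * (t + k) - c))
      = real (k choose t) * 2 powr (real (m * (t + k)) - real c)"
    by (simp add: of_nat_diff flip: powr_realpow)
  also have "\<dots> = real (k choose t) * (2 powr (real L * t) * 2 powr (real m * (t + k) - real t * (t + 1) / 2 - real L * t))"
    by (simp add: c_real flip: powr_add)
  also have "\<dots> \<le> (2 ^ L + 1) ^ k * 2 powr (real m * k + real m * (real m - 1) / 2 + real L * (L + 1) / 2 - real L * m)"
  proof -
    have "(2::real) powr (real L * t) = (2 ^ L) ^ t"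
      by (simp add: powr_realpow power_mult flip: of_nat_mult)
    then have "real (k choose t) * 2 powr (real L * t) \<le> (2 ^ L + 1) ^ k"
      using choose_mult_power_le[of "2 ^ L :: real" k t] by simp
    moreover have "real m * (t + k) - real t * (t + 1) / 2 - real L * t
        \<le> real m * k + real m * (real m - 1) / 2 + real L * (L + 1) / 2 - real L * m"
      using shift by (simp add: algebra_simps)
    ultimately show ?thesis
      by (subst mult.assoc[symmetric], intro mult_mono) simp_all
  qed
  finally show ?thesis
    by (simp add: c_def)
qed

lemma fwi_bound_le:
  "real (fwi_bound s k) \<le> real (s - 1) * ((2 ^ L + 1) ^ k *
    2 powr (real (s - 1) * k + real (s - 1) * (real (s - 1) - 1) / 2 + real L * (L + 1) / 2 - real L * (s - 1)))"
  unfolding fwi_bound_def of_nat_sum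
  using sum_mono[of "{1..s-1}", OF fwi_bound_term_le[of _ "s - 1" k L]] by simp

lemma log2_power_plus_one_le: "log 2 (2 ^ L + 1) \<le> real L + 2 / 2 ^ L"
proof -
  define y :: real where "y = 1 / 2 ^ L"
  have "y > 0"
    by (simp add: y_def)
  have "ln (1 / 2) \<le> 1 / 2 - (1::real)"
    by (rule ln_le_minus_one) simp
  then have ln2: "1 / 2 \<le> ln (2::real)"
    by (simp add: ln_div)
  have "log 2 (2 ^ L + 1) = log 2 (2 ^ L * (1 + y))"
    by (simp add: y_def distrib_left)
  also have "\<dots> = real L + ln (1 + y) / ln 2"
    using \<open>y > 0\<close> by (simp add: log_mult log_nat_power) (simp add: log_def)
  also have "\<dots> \<le> real L + y / (1 / 2)"
    using \<open>y > 0\<close> ln_add_one_self_le_self[of y] ln2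
    by (intro add_left_mono frac_le) auto
  also have "\<dots> = real L + 2 / 2 ^ L"
    by (simp add: y_def)
  finally show ?thesis .
qed

lemma log_fwi_bound_le:
  assumes "2 \<le> s"
  shows "log 2 (fwi_bound s (s + a)) \<le> 3/2 * real s ^ 2 + real a * real s - 5/2 * real s
    + (log 2 s + real L * a + (real L + 1) ^ 2 + 2 * (s + a) / 2 ^ L)"
proof -
  define k where "k = s + a"
  define X where "X = real (s - 1) * k + real (s - 1) * (real (s - 1) - 1) / 2 + real L * (L + 1) / 2 - real L * (s - 1)"
  have pos: "0 < real (s - 1)" "(0::real) < 2 ^ L + 1" "0 < real (fwi_bound s k)"
    using assms fwi_bound_pos[OF assms] by (simp_all add: k_def add_pos_nonneg)
  have "log 2 (fwi_bound s k) \<le> log 2 (real (s - 1) * ((2 ^ L + 1) ^ k * 2 powr X))"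
    using fwi_bound_le[of s k L] pos by (intro log_mono) (simp_all add: X_def)
  also have "\<dots> = log 2 (s - 1) + k * log 2 (2 ^ L + 1) + X"
    using pos by (simp add: log_mult log_nat_power less_imp_neq[OF pos(2), symmetric])
  also have "\<dots> \<le> log 2 s + k * (L + 2 / 2 ^ L) + X"
    using pos(1) by (intro add_mono mult_left_mono log_mono log2_power_plus_one_le) auto
  also have "\<dots> = 3/2 * real s ^ 2 + real a * real s - 5/2 * real s
      + (log 2 s + real L * a + real L * (L + 1) / 2 + L + 1 - a + 2 * (s + a) / 2 ^ L)"
    using assms by (simp add: X_def k_def of_nat_diff field_simps power2_eq_square)
  also have "\<dots> \<le> 3/2 * real s ^ 2 + real a * real s - 5/2 * real s
      + (log 2 s + real L * a + (real L + 1) ^ 2 + 2 * (s + a) / 2 ^ L)"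
    by (simp add: power2_eq_square field_simps)
  finally show ?thesis
    by (simp add: k_def)
qed

lemma smallo_of_eventually_le:
  fixes e g :: "'a \<Rightarrow> real"
  assumes "\<And>x. 0 \<le> e x"
    and "\<And>c. c > 0 \<Longrightarrow> \<exists>h. h \<in> o[F](g) \<and> (\<forall>\<^sub>F x in F. e x \<le> c * norm (g x) + h x)"
  shows "e \<in> o[F](g)"
proof (rule landau_o.smallI)
  fix c :: real
  assume "c > 0"
  then obtain h where h: "h \<in> o[F](g)" and le: "\<forall>\<^sub>F x in F. e x \<le> c / 2 * norm (g x) + h x"
    using assms(2)[of "c / 2"] by auto
  have "\<forall>\<^sub>F x in F. norm (h x) \<le> c / 2 * norm (g x)"
    using h \<open>c > 0\<close> by (intro landau_o.smallD) auto
  with le show "\<forall>\<^sub>F x in F. norm (e x) \<le> c * norm (g x)"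
    by eventually_elim (use assms(1) in auto)
qed

lemma fwi_bound_powr_le:
  assumes a: "(\<lambda>s. real (a s)) \<in> o(\<lambda>s. real s)"
  obtains e :: "nat \<Rightarrow> real" where "e \<in> o(\<lambda>s. real s)"
    and "\<And>s. 2 \<le> s \<Longrightarrow> real (fwi_bound s (s + a s))
      \<le> 2 powr (3/2 * real s ^ 2 + real (a s) * real s - 5/2 * real s + e s)"
proof
  define main where "main s = 3/2 * real s ^ 2 + real (a s) * real s - 5/2 * real s" for s
  define e where "e s = max 0 (log 2 (fwi_bound s (s + a s)) - main s)" for s
  txt \<open>For every \<open>L\<close>, \<open>e s\<close> is at most \<open>L * a s + 2 * (s + a s) / 2 ^ L + O(log s)\<close>.\<close>
  show "real (fwi_bound s (s + a s)) \<le> 2 powr (main s + e s)" if "2 \<le> s" for s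
  proof -
    have "real (fwi_bound s (s + a s)) = 2 powr (log 2 (fwi_bound s (s + a s)))"
      using fwi_bound_pos[of s "s + a s"] that by simp
    also have "\<dots> \<le> 2 powr (main s + e s)"
      by (simp add: e_def)
    finally show ?thesis .
  qed
  show "e \<in> o(\<lambda>s. real s)"
  proof (rule smallo_of_eventually_le)
    fix c :: real
    assume "c > 0"
    obtain L :: nat where L: "4 / c < 2 ^ L"
      using real_arch_pow[of 2 "4 / c"] by auto
    define h where "h s = (real L + 2) * a s + (log 2 s + (real L + 1) ^ 2)" for s
    have "(\<lambda>s. (real L + 2) * a s) \<in> o(\<lambda>s. real s)"
      using a by simp
    moreover have "(\<lambda>s::nat. log 2 s + (real L + 1) ^ 2) \<in> o(\<lambda>s. real s)"
      by real_asymp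
    ultimately have "h \<in> o(\<lambda>s. real s)"
      unfolding h_def by (rule sum_in_smallo)
    moreover have "\<forall>\<^sub>F s in at_top. e s \<le> c * norm (real s) + h s"
      using eventually_ge_at_top[of 2]
    proof eventually_elim
      case (elim s)
      have "2 / 2 ^ L \<le> c / 2"
        using L \<open>c > 0\<close> by (simp add: field_simps)
      moreover have "2 / 2 ^ L \<le> (2::real)"
        by (simp add: field_simps)
      ultimately have "2 / 2 ^ L * real s + 2 / 2 ^ L * real (a s) \<le> c / 2 * real s + 2 * real (a s)"
        by (intro add_mono mult_right_mono) auto
      then have "2 * (real s + real (a s)) / 2 ^ L \<le> c / 2 * real s + 2 * real (a s)"
        by (simp add: field_simps)
      moreover have "0 \<le> c * real s"
        using \<open>c > 0\<close> by simp
      ultimately have "log 2 (fwi_bound s (s + a s)) - main s \<le> c * s + h s"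
        using log_fwi_bound_le[OF elim, of "a s" L]
        unfolding main_def h_def distrib_right by linarith
      moreover have "0 \<le> c * s + h s"
        using elim \<open>c > 0\<close> by (simp add: h_def)
      ultimately show ?case
        by (simp add: e_def)
    qed
    ultimately show "\<exists>h. h \<in> o(\<lambda>s. real s) \<and> (\<forall>\<^sub>F s in at_top. e s \<le> c * norm (real s) + h s)"
      by blast
  qed (simp add: e_def)
qed

theorem lemma3p1:
  shows "(\<forall>s k :: nat. 4 \<le> s \<and> s \<le> k \<longrightarrow>
           (\<exists>E :: (nat \<times> nat) set.
              loopless_digraph {0..<2^(2*s-3) - 2^(s-1) - 2^(s-2) + 1} E \<and>
              Ts_free {0..<2^(2*s-3) - 2^(s-1) - 2^(s-2) + 1} E s \<and>
              fwi {0..<2^(2*s-3) - 2^(s-1) - 2^(s-2) + 1} E k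
                \<le> (\<Sum>t=1..s-1. (k choose t) * 2 ^ ((s-1)*(t+k) - ((t+1) choose 2)))))
     \<and>
     (\<forall>a :: nat \<Rightarrow> nat. (\<lambda>s. real (a s)) \<in> o(\<lambda>s. real s) \<longrightarrow>
        (\<exists>e :: nat \<Rightarrow> real. e \<in> o(\<lambda>s. real s) \<and>
           (\<forall>s \<ge> 4. \<exists>E :: (nat \<times> nat) set.
              loopless_digraph {0..<2^(2*s-3) - 2^(s-1) - 2^(s-2) + 1} E \<and>
              Ts_free {0..<2^(2*s-3) - 2^(s-1) - 2^(s-2) + 1} E s \<and>
              fwi {0..<2^(2*s-3) - 2^(s-1) - 2^(s-2) + 1} E (s + a s)
                \<le> (\<Sum>t=1..s-1. ((s + a s) choose t) * 2 ^ ((s-1)*(t+(s + a s)) - ((t+1) choose 2))) \<and>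
              real (fwi {0..<2^(2*s-3) - 2^(s-1) - 2^(s-2) + 1} E (s + a s))
                \<le> 2 powr (3/2 * real s ^ 2 + real (a s) * real s - 5/2 * real s + e s))))"
  unfolding vertex_count_def[symmetric] fwi_bound_def[symmetric]
proof (intro conjI allI impI)
  fix a :: "nat \<Rightarrow> nat"
  assume "(\<lambda>s. real (a s)) \<in> o(\<lambda>s. real s)"
  then obtain e where e_small: "e \<in> o(\<lambda>s. real s)"
    and bound: "\<And>s. 2 \<le> s \<Longrightarrow> real (fwi_bound s (s + a s))
      \<le> 2 powr (3/2 * real s ^ 2 + real (a s) * real s - 5/2 * real s + e s)"
    by (rule fwi_bound_powr_le) blast
  show "\<exists>e. e \<in> o(\<lambda>s. real s) \<and> (\<forall>s \<ge> 4. \<exists>E. loopless_digraph {0..<vertex_count s} E \<and>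
      Ts_free {0..<vertex_count s} E s \<and> fwi {0..<vertex_count s} E (s + a s) \<le> fwi_bound s (s + a s) \<and>
      real (fwi {0..<vertex_count s} E (s + a s))
        \<le> 2 powr (3/2 * real s ^ 2 + real (a s) * real s - 5/2 * real s + e s))"
    apply (intro exI[of _ e] conjI allI impI e_small)
    subgoal for s
      using exists_Ts_free_digraph_fwi_le[of s "s + a s"] bound[of s]
      by (auto intro: order_trans[OF of_nat_mono])
    done
qed (intro exists_Ts_free_digraph_fwi_le, auto)

end
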